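(* Let $c>1$ and $d>1$ be irrational numbers, let $c'_n=[c^{-1}n]$, let $k$ be a nonnegative integer, and for a positive integer $m$ let $x=[cm]$. Then, as $m\to\infty$, \begin{align*} \int_1^x \frac{[d^{-1}([c^{-1}([t]+1)]+k+1)]}{t^2}\,dt =\;& (cd)^{-1}(\log m + \log c + \gamma)+d^{-1}(k+1)\\ & -\sum_{n=1}^\infty \frac{d^{-1}\{c^{-1}(n+1)\}+\{d^{-1}(c'_{n+1}+k+1)\}}{n(n+1)} + O\left(\frac{1}{m}\right), \end{align*} where $\gamma$ is Euler's constant.
   Context: $[x]$ is the greatest integer not exceeding $x$ and $\{x\}=x-[x]$. The implied constant may depend on $c,d,k$. *)

theory Defs
  imports "HOL-Analysis.Analysis" "HOL-Library.Landau_Symbols"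
begin

end

theory Submission imports Defs "HOL-Real_Asymp.Real_Asymp" begin

text \<open>
  Since \<open>\<lfloor>t\<rfloor>\<close> is constant on \<open>[n, n + 1)\<close>, the integral up to \<open>x\<close> is the sum over
  \<open>n < x\<close> of \<open>B(n) / (n (n + 1))\<close>, where \<open>B(n)\<close> is the nested floor. Removing both floors
  writes \<open>B(n) = (n + 1) / (c d) + (k + 1) / d - F(n)\<close> with \<open>0 \<le> F(n) \<le> 2\<close>, and
  \<open>F(n)\<close> is exactly the numerator of the series in the statement. The first part gives
  \<open>(c d)\<^sup>-\<^sup>1\<close> times a harmonic number, i.e. \<open>(c d)\<^sup>-\<^sup>1 (log x + \<gamma>) + O(1/x)\<close>; the second
  telescopes to \<open>(k + 1) / d + O(1/x)\<close>; the third is a convergent series whose tail is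
  \<open>O(1/x)\<close>. Finally \<open>x = \<lfloor>c m\<rfloor> = c m + O(1)\<close> turns \<open>log x\<close> into
  \<open>log m + log c + O(1/m)\<close>.
\<close>

lemma has_integral_floor_step_over_square:
  fixes B :: "int \<Rightarrow> real"
  shows "((\<lambda>t. B \<lfloor>t\<rfloor> / t\<^sup>2) has_integral
          (\<Sum>n<N. B (int (Suc n)) / (real (Suc n) * (real (Suc n) + 1)))) {1..real (Suc N)}"
proof (induction N)
  case 0
  then show ?case by (auto intro: has_integral_refl)
next
  case (Suc N)
  let ?a = "real (Suc N)" and ?b = "real (Suc (Suc N))" and ?v = "B (int (Suc N))"
  have "((\<lambda>t. ?v / t\<^sup>2) has_integral (- ?v / ?b) - (- ?v / ?a)) {?a..?b}"
    by (rule fundamental_theorem_of_calculus)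
      (auto intro!: derivative_eq_intros
        simp: has_real_derivative_iff_has_vector_derivative[symmetric] power2_eq_square)
  moreover have "(- ?v / ?b) - (- ?v / ?a) = ?v / (?a * (?a + 1))"
    by (simp add: field_simps)
  ultimately have const: "((\<lambda>t. ?v / t\<^sup>2) has_integral ?v / (?a * (?a + 1))) {?a..?b}"
    by simp
  have "((\<lambda>t. B \<lfloor>t\<rfloor> / t\<^sup>2) has_integral ?v / (?a * (?a + 1))) {?a..?b}"
  proof (rule has_integral_spike_finite_eq[where S="{?b}", THEN iffD1, OF _ _ const])
    fix t assume "t \<in> {?a..?b} - {?b}"
    then have "\<lfloor>t\<rfloor> = int (Suc N)" by (auto simp: floor_eq_iff)
    then show "B \<lfloor>t\<rfloor> / t\<^sup>2 = ?v / t\<^sup>2" by simp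
  qed simp
  from has_integral_combine[OF _ _ Suc this] show ?case by simp
qed

lemma sum_inverse_consecutive_product:
  "(\<Sum>n<N. 1 / (real (Suc n) * (real (Suc n) + 1))) = 1 - 1 / (real N + 1)"
proof (induction N)
  case (Suc N)
  have "(\<Sum>n<Suc N. 1 / (real (Suc n) * (real (Suc n) + 1)))
      = 1 - 1 / (real N + 1) + 1 / ((real N + 1) * (real N + 2))"
    using Suc by (simp add: ac_simps)
  also have "\<dots> = 1 - 1 / (real (Suc N) + 1)"
    by (simp add: divide_simps) (simp add: algebra_simps)
  finally show ?case .
qed simp

lemma sums_inverse_consecutive_product_from:
  "(\<lambda>n. 1 / (real (n + N + 1) * (real (n + N + 1) + 1))) sums (1 / (real N + 1))"
proof -
  have "(\<lambda>n. 1 / (real (n + N) + 1)) \<longlonglongrightarrow> 0" by real_asymp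
  from telescope_sums'[OF this] show ?thesis
    by (simp add: field_simps)
qed

lemma tail_bound_inverse_consecutive_product:
  fixes G :: "nat \<Rightarrow> real"
  assumes "\<And>n. 0 \<le> G n" and "\<And>n. G n \<le> C / (real (Suc n) * (real (Suc n) + 1))"
  shows "summable G" and "\<bar>suminf G - (\<Sum>n<N. G n)\<bar> \<le> C / (real N + 1)"
proof -
  have dominant: "(\<lambda>n. C / (real (n + N + 1) * (real (n + N + 1) + 1))) sums (C / (real N + 1))"
    for N
    using sums_mult[OF sums_inverse_consecutive_product_from[of N], where c=C] by simp
  show summable: "summable G"
    using dominant[of 0] assms by (intro summable_comparison_test'[OF sums_summable]) auto
  have tail: "suminf G - (\<Sum>n<N. G n) = (\<Sum>n. G (n + N))"
    using suminf_split_initial_segment[OF summable, of N] by simp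
  have shifted: "summable (\<lambda>n. G (n + N))"
    using summable by (simp add: summable_iff_shift)
  have "0 \<le> (\<Sum>n. G (n + N))"
    using assms(1) by (intro suminf_nonneg[OF shifted])
  moreover have "(\<Sum>n. G (n + N)) \<le> C / (real N + 1)"
  proof (rule sums_le[OF _ summable_sums[OF shifted] dominant[of N]])
    show "G (n + N) \<le> C / (real (n + N + 1) * (real (n + N + 1) + 1))" for n
      using assms(2)[of "n + N"] by simp
  qed
  ultimately show "\<bar>suminf G - (\<Sum>n<N. G n)\<bar> \<le> C / (real N + 1)"
    unfolding tail by simp
qed

lemma harm_minus_ln_bound:
  assumes "N \<ge> 1"
  shows "\<bar>harm N - ln (real N + 1) - euler_mascheroni\<bar> \<le> 1 / (2 * real N)"
proof -
  obtain n where N: "N = Suc n" using assms by (cases N) auto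
  have "euler_mascheroni \<le> harm N - ln (real N + 1) + 1 / (2 * real N)"
    using euler_mascheroni_upper[of n] by (simp add: N add.commute)
  moreover have "harm N - ln (real N + 1) + 1 / (2 * (real N + 1)) \<le> euler_mascheroni"
    using euler_mascheroni_lower[of n] by (simp add: N add.commute)
  moreover have "0 \<le> 1 / (2 * (real N + 1))" by simp
  ultimately show ?thesis by linarith
qed

lemma floor_nested_quotient:
  fixes x K d :: real
  assumes "d \<noteq> 0"
  shows "real_of_int \<lfloor>(real_of_int \<lfloor>x\<rfloor> + K) / d\<rfloor>
    = (x + K) / d - (frac x / d + frac ((real_of_int \<lfloor>x\<rfloor> + K) / d))"
  using assms unfolding frac_def by (simp add: field_simps)

lemma integral_floor_affine_over_square_estimate:
  fixes B :: "int \<Rightarrow> real" and F :: "nat \<Rightarrow> real"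
  assumes B: "\<And>n. B (int n) = \<alpha> * (real n + 1) + \<beta> - F n"
    and F: "\<And>n. 0 \<le> F n" "\<And>n. F n \<le> C"
    and "N \<ge> 1"
  shows "\<bar>integral {1..real (Suc N)} (\<lambda>t. B \<lfloor>t\<rfloor> / t\<^sup>2)
      - (\<alpha> * (ln (real N + 1) + euler_mascheroni) + \<beta>
         - (\<Sum>n. F (Suc n) / (real (Suc n) * (real (Suc n) + 1))))\<bar>
    \<le> (\<bar>\<alpha>\<bar> + \<bar>\<beta>\<bar> + C) / real N"
proof -
  define G where "G n = F (Suc n) / (real (Suc n) * (real (Suc n) + 1))" for n
  have partial_fractions: "(\<alpha> * (a + 1) + \<beta> - f) / (a * (a + 1))
      = \<alpha> * inverse a + \<beta> * (1 / (a * (a + 1))) - f / (a * (a + 1))" if "a > 0" for a f :: real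
  proof -
    have "\<alpha> * (a + 1) / (a * (a + 1)) = \<alpha> * inverse a"
      using that by (simp add: mult_divide_mult_cancel_right divide_inverse)
    then show ?thesis by (simp add: add_divide_distrib diff_divide_distrib)
  qed
  have "B (int (Suc n)) / (real (Suc n) * (real (Suc n) + 1))
      = \<alpha> * inverse (real (Suc n)) + \<beta> * (1 / (real (Suc n) * (real (Suc n) + 1))) - G n" for n
    unfolding B G_def by (rule partial_fractions) simp
  then have integral: "integral {1..real (Suc N)} (\<lambda>t. B \<lfloor>t\<rfloor> / t\<^sup>2)
      = \<alpha> * harm N + \<beta> * (1 - 1 / (real N + 1)) - (\<Sum>n<N. G n)"
    by (simp only: integral_unique[OF has_integral_floor_step_over_square] sum_subtractf
        sum.distrib sum_distrib_left[symmetric] harm_altdef[symmetric]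
        sum_inverse_consecutive_product)
  have "C \<ge> 0" using F[of 0] by linarith
  have "\<bar>(\<Sum>n. G n) - (\<Sum>n<N. G n)\<bar> \<le> C / (real N + 1)"
    using F by (intro tail_bound_inverse_consecutive_product)
      (auto simp: G_def divide_right_mono simp del: of_nat_Suc)
  also have "\<dots> \<le> C / real N"
    using \<open>C \<ge> 0\<close> \<open>N \<ge> 1\<close> by (intro divide_left_mono) auto
  finally have tail: "\<bar>(\<Sum>n. G n) - (\<Sum>n<N. G n)\<bar> \<le> C / real N" .
  have "\<bar>\<alpha> * (harm N - ln (real N + 1) - euler_mascheroni)\<bar> \<le> \<bar>\<alpha>\<bar> * (1 / (2 * real N))"
    unfolding abs_mult using harm_minus_ln_bound[OF \<open>N \<ge> 1\<close>] by (intro mult_left_mono) auto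
  also have "\<dots> \<le> \<bar>\<alpha>\<bar> / real N"
    using \<open>N \<ge> 1\<close> by (simp add: field_simps)
  finally have harmonic: "\<bar>\<alpha> * (harm N - ln (real N + 1) - euler_mascheroni)\<bar> \<le> \<bar>\<alpha>\<bar> / real N" .
  have boundary: "\<bar>\<beta> / (real N + 1)\<bar> \<le> \<bar>\<beta>\<bar> / real N"
    using \<open>N \<ge> 1\<close> by (simp add: abs_divide divide_left_mono)
  have error: "integral {1..real (Suc N)} (\<lambda>t. B \<lfloor>t\<rfloor> / t\<^sup>2)
      - (\<alpha> * (ln (real N + 1) + euler_mascheroni) + \<beta> - (\<Sum>n. G n))
    = \<alpha> * (harm N - ln (real N + 1) - euler_mascheroni) - \<beta> / (real N + 1)
      + ((\<Sum>n. G n) - (\<Sum>n<N. G n))"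
    unfolding integral by (simp add: algebra_simps)
  show ?thesis
    unfolding G_def[symmetric] add_divide_distrib error
    using harmonic boundary tail by linarith
qed

lemma ln_minus_ln_floor_bound:
  fixes y :: real
  assumes "y \<ge> 1"
  shows "\<bar>ln y - ln (of_int \<lfloor>y\<rfloor>)\<bar> \<le> 1 / of_int \<lfloor>y\<rfloor>"
proof -
  have pos: "of_int \<lfloor>y\<rfloor> > (0 :: real)" using assms by simp
  have "ln (of_int \<lfloor>y\<rfloor>) \<le> ln y"
    using pos by (simp add: of_int_floor_le)
  moreover have "ln y - ln (of_int \<lfloor>y\<rfloor>) \<le> (y - of_int \<lfloor>y\<rfloor>) / of_int \<lfloor>y\<rfloor>"
    using pos assms by (intro ln_diff_le) auto
  moreover have "(y - of_int \<lfloor>y\<rfloor>) / of_int \<lfloor>y\<rfloor> \<le> 1 / of_int \<lfloor>y\<rfloor>"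
    using pos by (intro divide_right_mono) linarith+
  ultimately show ?thesis by linarith
qed

lemma integral_floor_affine_over_square_bigo:
  fixes B :: "int \<Rightarrow> real" and F :: "nat \<Rightarrow> real" and c :: real
  assumes "c \<ge> 1"
    and B: "\<And>n. B (int n) = \<alpha> * (real n + 1) + \<beta> - F n"
    and F: "\<And>n. 0 \<le> F n" "\<And>n. F n \<le> C"
  shows "(\<lambda>m::nat. integral {1..real_of_int \<lfloor>c * real m\<rfloor>} (\<lambda>t. B \<lfloor>t\<rfloor> / t\<^sup>2)
      - (\<alpha> * (ln (real m) + ln c + euler_mascheroni) + \<beta>
         - (\<Sum>n. F (Suc n) / (real (Suc n) * (real (Suc n) + 1)))))
    \<in> O(\<lambda>m. 1 / real m)"
proof (rule bigoI)
  define S where "S = (\<Sum>n. F (Suc n) / (real (Suc n) * (real (Suc n) + 1)))"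
  define K where "K = 2 * \<bar>\<alpha>\<bar> + \<bar>\<beta>\<bar> + C"
  have "C \<ge> 0" using F[of 0] by linarith
  show "\<forall>\<^sub>F m in at_top. norm (integral {1..real_of_int \<lfloor>c * real m\<rfloor>} (\<lambda>t. B \<lfloor>t\<rfloor> / t\<^sup>2)
      - (\<alpha> * (ln (real m) + ln c + euler_mascheroni) + \<beta> - S)) \<le> (2 * K) * norm (1 / real m)"
    using eventually_ge_at_top[of "2 :: nat"]
  proof eventually_elim
    case (elim m)
    define N where "N = nat \<lfloor>c * real m\<rfloor> - 1"
    have "real m \<le> c * real m"
      using mult_right_mono[OF \<open>c \<ge> 1\<close>, of "real m"] by simp
    moreover have "real m \<ge> 2" using elim by simp
    ultimately have "c * real m \<ge> 1" "int m \<le> \<lfloor>c * real m\<rfloor>"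
      by (linarith, simp add: le_floor_iff)
    then have floor: "real_of_int \<lfloor>c * real m\<rfloor> = real (Suc N)" and "real m \<le> real N + 1"
      using elim by (auto simp: N_def of_nat_diff)
    then have "N \<ge> 1" "real m \<le> 2 * real N" using elim by auto
    have main: "\<bar>integral {1..real (Suc N)} (\<lambda>t. B \<lfloor>t\<rfloor> / t\<^sup>2)
        - (\<alpha> * (ln (real N + 1) + euler_mascheroni) + \<beta> - S)\<bar> \<le> (\<bar>\<alpha>\<bar> + \<bar>\<beta>\<bar> + C) / real N"
      unfolding S_def using B F \<open>N \<ge> 1\<close> by (rule integral_floor_affine_over_square_estimate)
    have "\<bar>ln (c * real m) - ln (real N + 1)\<bar> \<le> 1 / (real N + 1)"
      using ln_minus_ln_floor_bound[OF \<open>c * real m \<ge> 1\<close>] floor by (simp add: add.commute)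
    also have "\<dots> \<le> 1 / real N"
      using \<open>N \<ge> 1\<close> by (simp add: divide_left_mono)
    finally have logarithm: "\<bar>\<alpha> * (ln (c * real m) - ln (real N + 1))\<bar> \<le> \<bar>\<alpha>\<bar> * (1 / real N)"
      unfolding abs_mult by (intro mult_left_mono) auto
    have "ln (real m) + ln c = ln (c * real m)"
      using \<open>c \<ge> 1\<close> elim by (simp add: ln_mult)
    then have "integral {1..real (Suc N)} (\<lambda>t. B \<lfloor>t\<rfloor> / t\<^sup>2)
        - (\<alpha> * (ln (real m) + ln c + euler_mascheroni) + \<beta> - S)
      = (integral {1..real (Suc N)} (\<lambda>t. B \<lfloor>t\<rfloor> / t\<^sup>2)
          - (\<alpha> * (ln (real N + 1) + euler_mascheroni) + \<beta> - S))
        - \<alpha> * (ln (c * real m) - ln (real N + 1))"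
      by (simp add: algebra_simps)
    also have "\<bar>\<dots>\<bar> \<le> (\<bar>\<alpha>\<bar> + \<bar>\<beta>\<bar> + C) / real N + \<bar>\<alpha>\<bar> * (1 / real N)"
      by (rule order.trans[OF abs_triangle_ineq4 add_mono[OF main logarithm]])
    also have "\<dots> = K / real N"
      unfolding K_def by (simp add: add_divide_distrib)
    also have "\<dots> = 2 * K / (2 * real N)"
      by simp
    also have "\<dots> \<le> 2 * K / real m"
      using \<open>real m \<le> 2 * real N\<close> \<open>real m \<ge> 2\<close> \<open>C \<ge> 0\<close> unfolding K_def
      by (intro divide_left_mono) auto
    finally show ?case using floor by simp
  qed
qed

theorem lemma10:
  fixes c d :: real and k :: nat
  assumes "c > 1" and "d > 1" and "c \<notin> \<rat>" and "d \<notin> \<rat>"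
  shows "(\<lambda>m::nat.
      integral {1..real_of_int \<lfloor>c * real m\<rfloor>}
        (\<lambda>t. real_of_int \<lfloor>(real_of_int \<lfloor>(real_of_int \<lfloor>t\<rfloor> + 1) / c\<rfloor> + real k + 1) / d\<rfloor> / t\<^sup>2)
      - ( (1 / (c * d)) * (ln (real m) + ln c + euler_mascheroni) + (real k + 1) / d
          - (\<Sum>n. (frac ((real (Suc n) + 1) / c) / d
                     + frac ((real_of_int \<lfloor>(real (Suc n) + 1) / c\<rfloor> + real k + 1) / d))
                    / (real (Suc n) * (real (Suc n) + 1)))))
    \<in> O(\<lambda>m. 1 / real m)"
proof -
  define F where "F n = frac ((real n + 1) / c) / d
    + frac ((real_of_int \<lfloor>(real n + 1) / c\<rfloor> + real k + 1) / d)" for n :: nat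
  define B :: "int \<Rightarrow> real" where
    "B j = real_of_int \<lfloor>(real_of_int \<lfloor>(real_of_int j + 1) / c\<rfloor> + real k + 1) / d\<rfloor>" for j
  have "B (int n) = 1 / (c * d) * (real n + 1) + (real k + 1) / d - F n" for n
    using floor_nested_quotient[of d "(real n + 1) / c" "real k + 1"] \<open>d > 1\<close>
    unfolding B_def F_def by (simp add: add.assoc add_divide_distrib)
  moreover have "0 \<le> F n" and "F n \<le> 2" for n
  proof -
    have frac_scaled: "0 \<le> frac x / d" "frac x / d \<le> 1" for x
      using \<open>d > 1\<close> frac_lt_1[of x] by (simp_all add: frac_ge_0 divide_simps)
    show "0 \<le> F n" "F n \<le> 2"
      unfolding F_def using frac_scaled[of "(real n + 1) / c"]
        frac_ge_0[of "(real_of_int \<lfloor>(real n + 1) / c\<rfloor> + real k + 1) / d"]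
        frac_lt_1[of "(real_of_int \<lfloor>(real n + 1) / c\<rfloor> + real k + 1) / d"]
      by linarith+
  qed
  ultimately have "(\<lambda>m::nat. integral {1..real_of_int \<lfloor>c * real m\<rfloor>} (\<lambda>t. B \<lfloor>t\<rfloor> / t\<^sup>2)
      - (1 / (c * d) * (ln (real m) + ln c + euler_mascheroni) + (real k + 1) / d
         - (\<Sum>n. F (Suc n) / (real (Suc n) * (real (Suc n) + 1))))) \<in> O(\<lambda>m. 1 / real m)"
    using \<open>c > 1\<close> by (intro integral_floor_affine_over_square_bigo) auto
  then show ?thesis
    unfolding B_def F_def .
qed

end
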